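(* Let $G=(V,E)$ be a graph with maximum degree $\Delta\ge 1$, let $I_i\subseteq V$ be an independent set, let $A_i = V\setminus \hat\Gamma(I_i)$, and write $\deg_i,\Gamma_i,\hat\Gamma_i$ for degree, neighborhood and closed neighborhood in the induced subgraph $G(A_i)$. Perform one stage: each $v\in A_i$ independently selects itself with probability $\frac{1}{\Delta+1}$, and $I_{i+1} = I_i\cup\{v\in A_i : v \text{ is the only vertex of } \hat\Gamma_i(v) \text{ that selected itself}\}$; let $A_{i+1}=V\setminus\hat\Gamma(I_{i+1})$. Let $S\subseteq A_i$ be such that $\operatorname{dist}_G(u,u')\ge 5$ for all distinct $u,u'\in S$ and $\deg_i(u)\ge \Delta/2$ for all $u\in S$. Then $\Pr[S\subseteq A_{i+1}] \le p^{|S|}$, where $p = 1-(1-e^{-1/2})e^{-1}\approx 0.85$.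
   Context: For $U\subseteq V$, $\hat\Gamma(U)$ denotes $U$ together with all neighbors of vertices in $U$; for a vertex $v$, $\hat\Gamma(v)=\Gamma(v)\cup\{v\}$. $\operatorname{dist}_G$ is shortest-path distance in $G$. $G(U)$ denotes the subgraph induced by $U$. *)

theory Defs
  imports "HOL-Probability.Probability"
begin

definition simple_graph :: "'a set \<Rightarrow> ('a \<Rightarrow> 'a \<Rightarrow> bool) \<Rightarrow> bool" where
  "simple_graph V E \<longleftrightarrow> finite V \<and> (\<forall>u v. E u v \<longrightarrow> u \<in> V \<and> v \<in> V)
     \<and> (\<forall>u v. E u v \<longrightarrow> E v u) \<and> (\<forall>v. \<not> E v v)"

text \<open>Neighbourhood of v inside the vertex set U (so U = V gives Gamma(v),
U = A gives the neighbourhood in the induced subgraph G(A)).\<close>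
definition nbhd_in :: "('a \<Rightarrow> 'a \<Rightarrow> bool) \<Rightarrow> 'a set \<Rightarrow> 'a \<Rightarrow> 'a set" where
  "nbhd_in E U v = {u \<in> U. E v u}"

definition deg_in :: "('a \<Rightarrow> 'a \<Rightarrow> bool) \<Rightarrow> 'a set \<Rightarrow> 'a \<Rightarrow> nat" where
  "deg_in E U v = card (nbhd_in E U v)"

definition max_degree :: "'a set \<Rightarrow> ('a \<Rightarrow> 'a \<Rightarrow> bool) \<Rightarrow> nat" where
  "max_degree V E = Max (deg_in E V ` V)"

definition closed_nbhd_set :: "'a set \<Rightarrow> ('a \<Rightarrow> 'a \<Rightarrow> bool) \<Rightarrow> 'a set \<Rightarrow> 'a set" where
  "closed_nbhd_set V E U = U \<union> {u \<in> V. \<exists>w\<in>U. E w u}"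

definition independent_set :: "'a set \<Rightarrow> ('a \<Rightarrow> 'a \<Rightarrow> bool) \<Rightarrow> 'a set \<Rightarrow> bool" where
  "independent_set V E I \<longleftrightarrow> I \<subseteq> V \<and> (\<forall>u\<in>I. \<forall>v\<in>I. \<not> E u v)"

text \<open>Shortest-path distance (infinity if not connected).\<close>
definition edge_rel :: "'a set \<Rightarrow> ('a \<Rightarrow> 'a \<Rightarrow> bool) \<Rightarrow> ('a \<times> 'a) set" where
  "edge_rel V E = {(x, y). x \<in> V \<and> y \<in> V \<and> E x y}"

definition graph_dist :: "'a set \<Rightarrow> ('a \<Rightarrow> 'a \<Rightarrow> bool) \<Rightarrow> 'a \<Rightarrow> 'a \<Rightarrow> enat" where
  "graph_dist V E u v = Inf {enat n | n. (u, v) \<in> (edge_rel V E) ^^ n}"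

definition next_I :: "('a \<Rightarrow> 'a \<Rightarrow> bool) \<Rightarrow> 'a set \<Rightarrow> 'a set \<Rightarrow> ('a \<Rightarrow> bool) \<Rightarrow> 'a set" where
  "next_I E I A sel = I \<union> {v \<in> A. sel v \<and> (\<forall>u \<in> nbhd_in E A v. \<not> sel u)}"

end

theory Submission
  imports Defs
begin

text \<open>
  Write A for the set of still available vertices, N w for the neighbourhood
  of w inside G(A), and say that a vertex w joins if it selects itself while none of
  its neighbours in A does.  A vertex u of S stays available iff no vertex of the closed
  neighbourhood of u in G(A) joins.

  (1) This event only depends on the selections inside the radius-2 ball around u.  Since
      distinct vertices of S have distance at least 5, these balls are pairwise disjoint,
      and independence of the coin flips turns the probability of the intersection of the
      events into the product of their probabilities.

  (2) For a single u, enumerate its closed neighbourhood as w_0, ..., w_{k-1} with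
      k = deg(u) + 1.  The events "w_j joins and w_0, ..., w_{j-1} do not select
      themselves" are disjoint and each has probability at least q (1 - q)^(j + \<Delta>),
      where q = 1/(\<Delta> + 1).  Summing gives (1 - (1 - q)^k) (1 - q)^\<Delta>, which is at least
      (1 - e^(-1/2)) e^(-1) because k \<ge> \<Delta>/2 + 1.
\<close>

section \<open>Finite products of probability mass functions\<close>

lemma prob_pair_pmf_Times:
  "measure_pmf.prob (pair_pmf M N) (A \<times> B) = measure_pmf.prob M A * measure_pmf.prob N B"
proof -
  have "measure_pmf.prob (pair_pmf M N) (A \<times> B)
      = measure_pmf.prob (pair_pmf M N) ((A \<times> B) \<inter> set_pmf (pair_pmf M N))"
    by (rule measure_Int_set_pmf[symmetric])
  also have "(A \<times> B) \<inter> set_pmf (pair_pmf M N) = (A \<inter> set_pmf M) \<times> (B \<inter> set_pmf N)"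
    by auto
  also have "measure_pmf.prob (pair_pmf M N) \<dots>
      = measure_pmf.prob M (A \<inter> set_pmf M) * measure_pmf.prob N (B \<inter> set_pmf N)"
    by (rule measure_pmf_prob_product) (auto intro: countable_Int2)
  finally show ?thesis by (simp add: measure_Int_set_pmf)
qed

lemma prob_Pi_pmf_restrict:
  assumes "finite D" "D' \<subseteq> D" "B \<subseteq> D'"
    and local: "\<And>f g. (\<forall>x\<in>B. f x = g x) \<Longrightarrow> Q f = Q g"
  shows "measure_pmf.prob (Pi_pmf D' d p) {f. Q f} = measure_pmf.prob (Pi_pmf D d p) {f. Q f}"
proof -
  let ?r = "\<lambda>f x. if x \<in> D' then f x else d"
  have "Pi_pmf D' d p = map_pmf ?r (Pi_pmf D d p)"
    by (rule Pi_pmf_subset[OF assms(1,2)])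
  moreover have "Q (?r f) = Q f" for f
    by (rule local) (use assms(3) in auto)
  then have "?r -` {f. Q f} = {f. Q f}" by auto
  ultimately show ?thesis by (simp add: measure_map_pmf)
qed

lemma prob_Pi_pmf_disjoint_blocks:
  assumes "finite J" "finite D" "\<forall>j\<in>J. B j \<subseteq> D" "disjoint_family_on B J"
    and "\<And>j f g. j \<in> J \<Longrightarrow> (\<forall>x\<in>B j. f x = g x) \<Longrightarrow> Q j f = Q j g"
  shows "measure_pmf.prob (Pi_pmf D d p) {f. \<forall>j\<in>J. Q j f}
       = (\<Prod>j\<in>J. measure_pmf.prob (Pi_pmf D d p) {f. Q j f})"
  using assms
proof (induction J arbitrary: D rule: finite_induct)
  case empty
  then show ?case by simp
next
  case (insert j J)
  define C where "C = D - B j"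
  have local: "\<And>i f g. i \<in> insert j J \<Longrightarrow> \<forall>x\<in>B i. f x = g x \<Longrightarrow> Q i f = Q i g"
    using insert.prems(4) by blast
  have fin: "finite (B j)" "finite C"
    using insert.prems by (auto simp: C_def intro: finite_subset)
  have BC: "B i \<subseteq> C" if "i \<in> J" for i
    using insert.hyps(2) insert.prems(2,3) that
    by (auto simp: C_def disjoint_family_on_def)
  let ?glue = "\<lambda>(f, g) x. if x \<in> B j then f x else g x"
  have split: "Pi_pmf D d p = map_pmf ?glue (pair_pmf (Pi_pmf (B j) d p) (Pi_pmf C d p))"
  proof -
    have "D = B j \<union> C" using insert.prems by (auto simp: C_def)
    then show ?thesis by (simp only:) (rule Pi_pmf_union, use fin in \<open>auto simp: C_def\<close>)
  qed
  have "Q j (?glue (f, g)) = Q j f" for f g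
    by (rule local) auto
  moreover have "Q i (?glue (f, g)) = Q i g" if "i \<in> J" for i f g
    using BC[OF that] that by (intro local) (auto simp: C_def)
  ultimately have preimage:
    "?glue -` {f. \<forall>i\<in>insert j J. Q i f} = {f. Q j f} \<times> {g. \<forall>i\<in>J. Q i g}"
    by auto
  have marginal: "measure_pmf.prob (Pi_pmf D' d p) {f. Q i f}
                = measure_pmf.prob (Pi_pmf D d p) {f. Q i f}"
    if "i \<in> insert j J" "B i \<subseteq> D'" "D' \<subseteq> D" for i D'
    using that insert.prems(1,2) local[of i]
    by (intro prob_Pi_pmf_restrict[of D D' "B i"]) auto
  have "measure_pmf.prob (Pi_pmf D d p) {f. \<forall>i\<in>insert j J. Q i f}
      = measure_pmf.prob (Pi_pmf (B j) d p) {f. Q j f}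
        * measure_pmf.prob (Pi_pmf C d p) {g. \<forall>i\<in>J. Q i g}"
    unfolding split measure_map_pmf preimage prob_pair_pmf_Times ..
  also have "measure_pmf.prob (Pi_pmf C d p) {g. \<forall>i\<in>J. Q i g}
           = (\<Prod>i\<in>J. measure_pmf.prob (Pi_pmf C d p) {f. Q i f})"
    using fin BC insert.prems by (intro insert.IH) (auto simp: disjoint_family_on_def)
  also have "\<dots> = (\<Prod>i\<in>J. measure_pmf.prob (Pi_pmf D d p) {f. Q i f})"
    using BC by (intro prod.cong refl marginal) (auto simp: C_def)
  also have "measure_pmf.prob (Pi_pmf (B j) d p) {f. Q j f}
           = measure_pmf.prob (Pi_pmf D d p) {f. Q j f}"
    using insert.prems(2) by (intro marginal) auto
  finally show ?case using insert.hyps by simp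
qed

lemma prob_bernoulli_cylinder:
  assumes "finite D" "w \<in> D" "T \<subseteq> D" "w \<notin> T" "0 \<le> q" "q \<le> 1"
  shows "measure_pmf.prob (Pi_pmf D False (\<lambda>_. bernoulli_pmf q)) {f. f w \<and> (\<forall>x\<in>T. \<not> f x)}
       = q * (1 - q) ^ card T"
proof -
  define Bs where "Bs x = (if x = w then {True} else if x \<in> T then {False} else UNIV)" for x
  define c where "c x = (if x = w then q else if x \<in> T then 1 - q else 1)" for x
  have "{f. f w \<and> (\<forall>x\<in>T. \<not> f x)} = Pi D Bs"
    using assms(2,3,4) by (auto simp: Bs_def Pi_def)
  hence "measure_pmf.prob (Pi_pmf D False (\<lambda>_. bernoulli_pmf q)) {f. f w \<and> (\<forall>x\<in>T. \<not> f x)}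
      = (\<Prod>x\<in>D. measure_pmf.prob (bernoulli_pmf q) (Bs x))"
    using assms(1) by (simp add: measure_Pi_pmf_Pi)
  also have "\<dots> = (\<Prod>x\<in>D. c x)"
    using assms by (intro prod.cong) (auto simp: Bs_def c_def measure_pmf_single)
  also have "\<dots> = (\<Prod>x\<in>insert w T. c x)"
    using assms by (intro prod.mono_neutral_right) (auto simp: c_def)
  also have "\<dots> = q * (\<Prod>x\<in>T. c x)"
    using assms finite_subset[OF assms(3,1)] by (simp add: c_def)
  also have "(\<Prod>x\<in>T. c x) = (\<Prod>x\<in>T. 1 - q)"
    using assms(4) by (intro prod.cong) (auto simp: c_def)
  finally show ?thesis by simp
qed

lemma power_le_exp_minus_half:
  fixes D k :: nat
  assumes "D \<ge> 1" "real D + 2 \<le> 2 * real k"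
  shows "(1 - 1 / (real D + 1)) ^ k \<le> exp (-1/2)"
proof -
  define q where "q = 1 / (real D + 1)"
  have "1 - q \<le> exp (-q)" using exp_ge_add_one_self[of "-q"] by simp
  moreover have "0 \<le> 1 - q" using assms by (simp add: q_def field_simps)
  ultimately have "(1 - q) ^ k \<le> exp (-q) ^ k" by (rule power_mono)
  also have "\<dots> = exp (- (real k * q))" by (simp add: exp_of_nat_mult[symmetric])
  also have "\<dots> \<le> exp (-1/2)"
    using assms by (simp add: q_def field_simps)
  finally show ?thesis by (simp add: q_def)
qed

text \<open>e^(-1) \<le> (1 - 1/(\<Delta>+1))^\<Delta>, i.e. (1 + 1/\<Delta>)^\<Delta> \<le> e.\<close>
lemma exp_minus_one_le_power:
  fixes D :: nat
  assumes "D \<ge> 1"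
  shows "exp (-1) \<le> (1 - 1 / (real D + 1)) ^ D"
proof -
  have "1 + 1 / real D \<le> exp (1 / real D)" using exp_ge_add_one_self[of "1 / real D"] by simp
  hence "(1 + 1 / real D) ^ D \<le> exp (1 / real D) ^ D" by (rule power_mono) simp
  also have "\<dots> = exp 1" using assms by (simp add: exp_of_nat_mult[symmetric])
  finally have bound: "(1 + 1 / real D) ^ D \<le> exp 1" .
  have pos: "0 < (1 + 1 / real D) ^ D" by (simp add: add_pos_nonneg)
  have "exp (-1) = 1 / exp (1::real)" by (simp add: exp_minus inverse_eq_divide)
  also have "\<dots> \<le> 1 / (1 + 1 / real D) ^ D" using bound pos by (intro divide_left_mono) auto
  also have "\<dots> = (1 - 1 / (real D + 1)) ^ D"
    using assms by (simp add: field_simps power_one_over)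
  finally show ?thesis .
qed

section \<open>The probability that a vertex is eliminated\<close>

text \<open>Selections are functions f :: 'a \<Rightarrow> bool, and N w is the neighbourhood of w in the
  current graph G(A).\<close>
definition joins :: "('a \<Rightarrow> 'a set) \<Rightarrow> ('a \<Rightarrow> bool) \<Rightarrow> 'a \<Rightarrow> bool" where
  "joins N f w \<longleftrightarrow> f w \<and> (\<forall>x\<in>N w. \<not> f x)"

definition covered :: "('a \<Rightarrow> 'a set) \<Rightarrow> ('a \<Rightarrow> bool) \<Rightarrow> 'a \<Rightarrow> bool" where
  "covered N f u \<longleftrightarrow> (\<exists>w\<in>insert u (N u). joins N f w)"

locale coin_graph =
  fixes A :: "'a set" and N :: "'a \<Rightarrow> 'a set" and D :: nat and q :: real
  assumes finite_A: "finite A"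
    and nbhd_subset: "\<And>w. w \<in> A \<Longrightarrow> N w \<subseteq> A"
    and not_self_nbhd: "\<And>w. w \<in> A \<Longrightarrow> w \<notin> N w"
    and degree_le: "\<And>w. w \<in> A \<Longrightarrow> card (N w) \<le> D"
    and q_nonneg: "0 \<le> q" and q_le_one: "q \<le> 1"
begin

abbreviation M :: "('a \<Rightarrow> bool) pmf" where
  "M \<equiv> Pi_pmf A False (\<lambda>_. bernoulli_pmf q)"

lemma prob_joins_avoiding:
  assumes "w \<in> A" "T \<subseteq> A" "w \<notin> T" "card T \<le> j"
  shows "q * (1 - q) ^ (j + D) \<le> measure_pmf.prob M {f. f w \<and> (\<forall>x\<in>T \<union> N w. \<not> f x)}"
proof -
  have "card (T \<union> N w) \<le> j + D"
    using card_Un_le[of T "N w"] degree_le[OF assms(1)] assms(4) by linarith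
  hence "(1 - q) ^ (j + D) \<le> (1 - q) ^ card (T \<union> N w)"
    using q_nonneg q_le_one by (intro power_decreasing) auto
  moreover have "measure_pmf.prob M {f. f w \<and> (\<forall>x\<in>T \<union> N w. \<not> f x)}
               = q * (1 - q) ^ card (T \<union> N w)"
    using assms nbhd_subset not_self_nbhd finite_A q_nonneg q_le_one
    by (intro prob_bernoulli_cylinder) auto
  ultimately show ?thesis using q_nonneg by (simp add: mult_left_mono)
qed

text \<open>Some vertex of W joins with probability at least (1 - (1-q)^|W|)(1-q)^\<Delta>: split the
  event according to the first vertex of W (in a fixed order) that selects itself.\<close>
lemma prob_some_joins:
  assumes "W \<subseteq> A"
  shows "(1 - (1 - q) ^ card W) * (1 - q) ^ D \<le> measure_pmf.prob M {f. \<exists>w\<in>W. joins N f w}"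
proof -
  obtain ws where ws: "set ws = W" "distinct ws"
    using finite_distinct_list finite_subset[OF assms finite_A] by blast
  define k where "k = length ws"
  have k: "card W = k" using ws by (simp add: k_def distinct_card[symmetric])
  define F where "F j = {f. f (ws ! j) \<and> (\<forall>x\<in>set (take j ws) \<union> N (ws ! j). \<not> f x)}" for j
  have ws_A: "ws ! j \<in> A" if "j < k" for j
    using that assms ws(1) nth_mem[of j ws] by (auto simp: k_def)
  have earlier: "ws ! i \<in> set (take j ws)" if "i < j" "j < k" for i j
  proof -
    have "take j ws ! i = ws ! i" "i < length (take j ws)" using that by (simp_all add: k_def)
    then show ?thesis by (metis nth_mem)
  qed
  have not_earlier: "ws ! j \<notin> set (take j ws)" if "j < k" for j
    using distinct_take[OF ws(2), of "Suc j"] that by (simp add: take_Suc_conv_app_nth k_def)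
  have "(1 - (1 - q) ^ k) * (1 - q) ^ D = (\<Sum>j<k. q * (1 - q) ^ (j + D))"
    by (simp add: one_diff_power_eq sum_distrib_left sum_distrib_right power_add mult_ac)
  also have "\<dots> \<le> (\<Sum>j<k. measure_pmf.prob M (F j))"
  proof (intro sum_mono)
    fix j assume "j \<in> {..<k}"
    then show "q * (1 - q) ^ (j + D) \<le> measure_pmf.prob M (F j)"
      unfolding F_def using ws assms card_length[of "take j ws"]
      by (intro prob_joins_avoiding ws_A not_earlier) (auto dest: in_set_takeD)
  qed
  also have "\<dots> = measure_pmf.prob M (\<Union>j<k. F j)"
  proof (rule measure_pmf.finite_measure_finite_Union[symmetric])
    show "disjoint_family_on F {..<k}"
      unfolding disjoint_family_on_def
    proof (intro ballI impI)
      fix i j assume "i \<in> {..<k}" "j \<in> {..<k}" "i \<noteq> j"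
      then consider "i < j" "j < k" | "j < i" "i < k" by fastforce
      then show "F i \<inter> F j = {}"
        by cases (auto simp: F_def dest: earlier)
    qed
  qed auto
  also have "\<dots> \<le> measure_pmf.prob M {f. \<exists>w\<in>W. joins N f w}"
    using ws(1) by (intro measure_pmf.finite_measure_mono)
                   (auto simp: F_def joins_def k_def)
  finally show ?thesis by (simp add: k)
qed

lemma prob_not_covered_le:
  assumes "u \<in> A" "D \<ge> 1" "q = 1 / (real D + 1)" "real D / 2 \<le> real (card (N u))"
  shows "measure_pmf.prob M {f. \<not> covered N f u} \<le> 1 - (1 - exp (-1/2)) * exp (-1)"
proof -
  have card_closed: "card (insert u (N u)) = card (N u) + 1"
    using assms(1) not_self_nbhd finite_subset[OF nbhd_subset finite_A] by simp
  have "(1 - exp (-1/2)) * exp (-1) \<le> (1 - (1 - q) ^ card (insert u (N u))) * (1 - q) ^ D"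
  proof (rule mult_mono)
    show "1 - exp (-1/2) \<le> 1 - (1 - q) ^ card (insert u (N u))"
      using power_le_exp_minus_half[OF assms(2), of "card (N u) + 1"] assms(3,4) card_closed
      by simp
    show "exp (-1) \<le> (1 - q) ^ D" using exp_minus_one_le_power[OF assms(2)] assms(3) by simp
    show "0 \<le> 1 - (1 - q) ^ card (insert u (N u))"
      using q_nonneg q_le_one by (simp add: power_le_one)
  qed simp
  also have "\<dots> \<le> measure_pmf.prob M {f. covered N f u}"
    unfolding covered_def using assms(1) nbhd_subset by (intro prob_some_joins) auto
  also have "{f. covered N f u} = space (measure_pmf M) - {f. \<not> covered N f u}"
    by auto
  also have "measure_pmf.prob M \<dots> = 1 - measure_pmf.prob M {f. \<not> covered N f u}"
    by (rule measure_pmf.prob_compl) simp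
  finally show ?thesis by simp
qed

end

definition ball2 :: "('a \<Rightarrow> 'a set) \<Rightarrow> 'a \<Rightarrow> 'a set" where
  "ball2 N u = insert u (N u) \<union> (\<Union>w\<in>insert u (N u). N w)"

lemma covered_local:
  assumes "\<forall>x\<in>ball2 N u. f x = g x"
  shows "covered N f u = covered N g u"
  using assms unfolding covered_def joins_def ball2_def by (intro bex_cong refl) auto

context
  fixes V :: "'a set" and E :: "'a \<Rightarrow> 'a \<Rightarrow> bool"
  assumes graph: "simple_graph V E"
begin

lemma card_nbhd_le_max_degree:
  assumes "A \<subseteq> V" "w \<in> A"
  shows "card (nbhd_in E A w) \<le> max_degree V E"
proof -
  have finV: "finite V" using graph by (simp add: simple_graph_def)
  have "card (nbhd_in E A w) \<le> card (nbhd_in E V w)"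
    using assms(1) finV by (intro card_mono) (auto simp: nbhd_in_def)
  also have "\<dots> \<le> max_degree V E"
    unfolding max_degree_def deg_in_def[symmetric] using finV assms by (intro Max_ge) auto
  finally show ?thesis .
qed

lemma available_after_stage_iff:
  assumes "A = V - closed_nbhd_set V E I" "u \<in> A"
  shows "u \<in> V - closed_nbhd_set V E (next_I E I A f) \<longleftrightarrow> \<not> covered (nbhd_in E A) f u"
proof -
  have sym: "E x y \<longleftrightarrow> E y x" for x y using graph by (auto simp: simple_graph_def)
  have u: "u \<in> V" "u \<notin> I" "\<forall>w\<in>I. \<not> E w u"
    using assms by (auto simp: closed_nbhd_set_def)
  show ?thesis
    using u assms(2) unfolding next_I_def covered_def joins_def closed_nbhd_set_def nbhd_in_def
    by (auto simp: sym)
qed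

lemma graph_dist_le:
  assumes "(u, v) \<in> edge_rel V E ^^ n"
  shows "graph_dist V E u v \<le> enat n"
  unfolding graph_dist_def using assms by (intro Inf_lower) auto

lemma ball2_reachable:
  assumes "A \<subseteq> V" "u \<in> A" "x \<in> ball2 (nbhd_in E A) u"
  shows "\<exists>n\<le>2. (u, x) \<in> edge_rel V E ^^ n \<and> (x, u) \<in> edge_rel V E ^^ n"
proof -
  let ?R = "edge_rel V E"
  have edge: "(a, b) \<in> ?R \<and> (b, a) \<in> ?R" if "b \<in> nbhd_in E A a" "a \<in> A" for a b
    using that assms(1) graph by (auto simp: edge_rel_def nbhd_in_def simple_graph_def)
  consider "x = u" | "x \<in> nbhd_in E A u" | w where "w \<in> nbhd_in E A u" "x \<in> nbhd_in E A w"
    using assms(3) unfolding ball2_def by blast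
  then show ?thesis
  proof cases
    case 1 then show ?thesis by (intro exI[of _ 0]) auto
  next
    case 2 then show ?thesis using edge[OF 2 assms(2)] by (intro exI[of _ 1]) auto
  next
    case 3
    have two_steps: "(a, c) \<in> ?R ^^ 2" if "(a, b) \<in> ?R" "(b, c) \<in> ?R" for a b c
      using relpow_Suc_I[OF relpow_Suc_I[OF relpow_0_I that(1)] that(2)]
      by (simp add: numeral_2_eq_2)
    have "w \<in> A" using 3 by (simp add: nbhd_in_def)
    then have "(u, x) \<in> ?R ^^ 2" "(x, u) \<in> ?R ^^ 2"
      using edge[OF 3(1) assms(2)] edge[OF 3(2)] two_steps by blast+
    then show ?thesis by (intro exI[of _ 2]) simp
  qed
qed

lemma ball2_disjoint:
  assumes "A \<subseteq> V" "u \<in> A" "u' \<in> A" "graph_dist V E u u' \<ge> 5"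
  shows "ball2 (nbhd_in E A) u \<inter> ball2 (nbhd_in E A) u' = {}"
proof (rule ccontr)
  assume "ball2 (nbhd_in E A) u \<inter> ball2 (nbhd_in E A) u' \<noteq> {}"
  then obtain x where x: "x \<in> ball2 (nbhd_in E A) u" "x \<in> ball2 (nbhd_in E A) u'" by auto
  obtain n where "n \<le> 2" "(u, x) \<in> edge_rel V E ^^ n"
    using ball2_reachable[OF assms(1,2) x(1)] by blast
  moreover obtain m where "m \<le> 2" "(x, u') \<in> edge_rel V E ^^ m"
    using ball2_reachable[OF assms(1,3) x(2)] by blast
  ultimately have "(u, u') \<in> edge_rel V E ^^ (n + m)" by (auto simp: relpow_add)
  then have "graph_dist V E u u' \<le> enat (n + m)" by (rule graph_dist_le)
  with assms(4) have "(5::enat) \<le> enat (n + m)" by (rule order_trans)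
  with \<open>n \<le> 2\<close> \<open>m \<le> 2\<close> show False by (simp add: numeral_eq_enat)
qed

end

theorem lemma4:
  fixes V :: "'a set" and E :: "'a \<Rightarrow> 'a \<Rightarrow> bool" and I S :: "'a set"
  assumes "simple_graph V E"
    and "max_degree V E \<ge> 1"
    and "independent_set V E I"
    and "S \<subseteq> V - closed_nbhd_set V E I"
    and "\<forall>u\<in>S. \<forall>u'\<in>S. u \<noteq> u' \<longrightarrow> graph_dist V E u u' \<ge> 5"
    and "\<forall>u\<in>S. real (deg_in E (V - closed_nbhd_set V E I) u) \<ge> real (max_degree V E) / 2"
  shows "measure_pmf.prob
           (Pi_pmf (V - closed_nbhd_set V E I) False
              (\<lambda>_. bernoulli_pmf (1 / (real (max_degree V E) + 1))))
           {sel. S \<subseteq> V - closed_nbhd_set V E (next_I E I (V - closed_nbhd_set V E I) sel)}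
         \<le> (1 - (1 - exp (-1/2)) * exp (-1)) ^ card S"
proof -
  define A where "A = V - closed_nbhd_set V E I"
  define N where "N = nbhd_in E A"
  define q where "q = 1 / (real (max_degree V E) + 1)"
  have AV: "A \<subseteq> V" and SA: "S \<subseteq> A" using assms(4) by (auto simp: A_def)
  interpret coin_graph A N "max_degree V E" q
    using assms(1) card_nbhd_le_max_degree[OF assms(1) AV]
    by unfold_locales (auto simp: simple_graph_def N_def nbhd_in_def A_def q_def)
  have event: "{sel. S \<subseteq> V - closed_nbhd_set V E (next_I E I A sel)}
             = {f. \<forall>u\<in>S. \<not> covered N f u}"
    using available_after_stage_iff[OF assms(1) A_def] SA unfolding N_def by blast
  have balls_disjoint: "disjoint_family_on (ball2 N) S"
    unfolding disjoint_family_on_def N_def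
    using ball2_disjoint[OF assms(1) AV] assms(5) SA by blast
  have balls_in_A: "\<forall>u\<in>S. ball2 N u \<subseteq> A"
    using SA nbhd_subset unfolding ball2_def by blast
  have "measure_pmf.prob M {sel. S \<subseteq> V - closed_nbhd_set V E (next_I E I A sel)}
      = measure_pmf.prob M {f. \<forall>u\<in>S. \<not> covered N f u}"
    by (simp only: event)
  also have "\<dots> = (\<Prod>u\<in>S. measure_pmf.prob M {f. \<not> covered N f u})"
    using covered_local[of N] finite_subset[OF SA finite_A]
    by (intro prob_Pi_pmf_disjoint_blocks[OF _ finite_A balls_in_A balls_disjoint]) auto
  also have "\<dots> \<le> (\<Prod>u\<in>S. 1 - (1 - exp (-1/2)) * exp (-1))"
  proof (intro prod_mono conjI measure_nonneg)
    fix u assume "u \<in> S"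
    then show "measure_pmf.prob M {f. \<not> covered N f u} \<le> 1 - (1 - exp (-1/2)) * exp (-1)"
      using SA assms(2,6) by (intro prob_not_covered_le) (auto simp: q_def N_def A_def deg_in_def)
  qed
  finally show ?thesis by (simp add: A_def q_def)
qed

end
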